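(* Let $(r(k))_{k\ge 0}$ be arbitrary elements of a commutative ring, and define numbers $b(n,k)$ for integers $n\ge 0$, $k\ge -1$ by $b(0,k)=[k=0]$, $b(n,-1)=0$, and for $n>0$, $k\ge 0$, $$b(n,k)=b(n-1,k-1)+r(k)\,b(n-1,k+1).$$ Then for all integers $n,\ell\ge 0$, $$\sum_{k=0}^{\min(n,\ell)} b(2n,2k)\,b(2\ell,2k)\prod_{j=0}^{2k-1} r(j)=b(2n+2\ell,0).$$
   Context: $[P]$ denotes the Iverson bracket (1 if $P$ is true, 0 otherwise). An empty product equals $1$. *)

theory Defs
  imports Main
begin

text \<open>b r n k for n, k >= 0; the boundary value b(n,-1)=0 is built into
  the recursion (the term b(n-1,k-1) is read as 0 when k = 0).\<close>
fun bnum :: "(nat \<Rightarrow> 'a::comm_ring_1) \<Rightarrow> nat \<Rightarrow> nat \<Rightarrow> 'a" where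
  "bnum r 0 k = (if k = 0 then 1 else 0)"
| "bnum r (Suc n) k = (if k = 0 then 0 else bnum r n (k - 1)) + r k * bnum r n (k + 1)"

end

theory Submission
  imports Defs
begin

(* Combinatorially, bnum r n k is the total weight of the lattice paths of length n
   from height 0 to height k, where an up step costs 1 and a down step from height
   j+1 to j costs r j.  Reading such a path backwards, a path from height h down to 0
   has weight bnum r n h * (r 0 * ... * r (h-1)); we call this quantity bdown.

   The theorem is a "cut the path at time 2n" identity.  We prove, for arbitrary
   lengths m and p, the splitting formula
       bnum r (m + p) 0 = (SUM h <= m + p. bnum r m h * bdown r p h),
   by induction on m: the inductive step is an adjointness relation which moves one
   step of the path from the descending part to the ascending part.  The theorem
   then follows with m = 2n, p = 2l, since by parity and the height bound only
   the even heights h = 2k with k <= min n l contribute. *)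

lemma bnum_above_length: "n < k \<Longrightarrow> bnum r n k = 0"
  by (induction n arbitrary: k) auto

text \<open>Every step changes the height by one, so length and final height have equal parity.\<close>
lemma bnum_odd: "odd (n + k) \<Longrightarrow> bnum r n k = 0"
  by (induction n arbitrary: k) (auto simp: bnum_above_length intro: odd_pos)

definition bdown :: "(nat \<Rightarrow> 'a::comm_ring_1) \<Rightarrow> nat \<Rightarrow> nat \<Rightarrow> 'a" where
  "bdown r p h = bnum r p h * (\<Prod>j<h. r j)"

lemma bdown_Suc:
  "bdown r (Suc p) h = bdown r p (Suc h) + (if h = 0 then 0 else r (h - 1) * bdown r p (h - 1))"
  by (cases h) (auto simp: bdown_def algebra_simps lessThan_Suc)

lemma bdown_above_length: "p < h \<Longrightarrow> bdown r p h = 0"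
  by (simp add: bdown_def bnum_above_length)

lemma bdown_0 [simp]: "bdown r p 0 = bnum r p 0"
  by (simp add: bdown_def)

text \<open>Adjointness: one step may be moved from the descending to the ascending part
  of a split path.  Both sides expand into the same two sums after an index shift.\<close>
lemma bnum_bdown_shift:
  assumes "m \<le> N" and "p \<le> N"
  shows "(\<Sum>h\<le>N. bnum r m h * bdown r (Suc p) h) = (\<Sum>h\<le>N. bnum r (Suc m) h * bdown r p h)"
  (is "?lhs = ?rhs")
proof -
  have up: "(\<Sum>h\<le>N. bnum r m h * bdown r p (Suc h))
      = (\<Sum>h\<le>N. (if h = 0 then 0 else bnum r m (h - 1)) * bdown r p h)"
  proof -
    have "(\<Sum>h\<le>N. bnum r m h * bdown r p (Suc h)) = (\<Sum>h<N. bnum r m h * bdown r p (Suc h))"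
      using assms by (simp add: lessThan_Suc_atMost[symmetric] bdown_above_length)
    also have "\<dots> = (\<Sum>h\<le>N. (if h = 0 then 0 else bnum r m (h - 1)) * bdown r p h)"
      by (cases N) (simp_all del: sum.atMost_Suc add: sum.atMost_Suc_shift lessThan_Suc_atMost)
    finally show ?thesis .
  qed
  have down: "(\<Sum>h\<le>N. bnum r m h * (if h = 0 then 0 else r (h - 1) * bdown r p (h - 1)))
      = (\<Sum>h\<le>N. r h * bnum r m (Suc h) * bdown r p h)"
  proof -
    have "(\<Sum>h\<le>N. bnum r m h * (if h = 0 then 0 else r (h - 1) * bdown r p (h - 1)))
        = (\<Sum>h<N. bnum r m (Suc h) * (r h * bdown r p h))"
      by (cases N) (simp_all del: sum.atMost_Suc add: sum.atMost_Suc_shift lessThan_Suc_atMost)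
    also have "\<dots> = (\<Sum>h\<le>N. r h * bnum r m (Suc h) * bdown r p h)"
      using assms by (simp add: lessThan_Suc_atMost[symmetric] bnum_above_length algebra_simps)
    finally show ?thesis .
  qed
  have "?lhs = (\<Sum>h\<le>N. bnum r m h * bdown r p (Suc h))
      + (\<Sum>h\<le>N. bnum r m h * (if h = 0 then 0 else r (h - 1) * bdown r p (h - 1)))"
    by (simp add: bdown_Suc distrib_left sum.distrib)
  also have "\<dots> = ?rhs"
    unfolding up down by (simp add: sum.distrib[symmetric] algebra_simps)
  finally show ?thesis .
qed

lemma bnum_split:
  "bnum r (m + p) 0 = (\<Sum>h\<le>m+p. bnum r m h * bdown r p h)"
proof (induction m arbitrary: p)
  case 0
  have "(\<Sum>h\<le>p. bnum r 0 h * bdown r p h) = (\<Sum>h\<in>{0}. bnum r 0 h * bdown r p h)"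
    by (rule sum.mono_neutral_right) auto
  then show ?case by simp
next
  case (Suc m)
  have "bnum r (Suc m + p) 0 = bnum r (m + Suc p) 0" by simp
  also have "\<dots> = (\<Sum>h\<le>m+p+1. bnum r m h * bdown r (Suc p) h)"
    using Suc.IH[of "Suc p"] by simp
  also have "\<dots> = (\<Sum>h\<le>Suc m+p. bnum r (Suc m) h * bdown r p h)"
    using bnum_bdown_shift[of m "m + p + 1" p r] by simp
  finally show ?case .
qed

lemma sum_even_support:
  fixes g :: "nat \<Rightarrow> 'a::comm_monoid_add"
  assumes odd_zero: "\<And>h. odd h \<Longrightarrow> g h = 0"
    and big_zero: "\<And>h. 2 * c < h \<Longrightarrow> g h = 0"
    and "2 * c \<le> N"
  shows "(\<Sum>h\<le>N. g h) = (\<Sum>k = 0..c. g (2 * k))"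
proof -
  have "(\<Sum>k = 0..c. g (2 * k)) = (\<Sum>h\<in>(\<lambda>k. 2 * k) ` {0..c}. g h)"
    by (subst sum.reindex) (auto simp: inj_on_def)
  also have "\<dots> = (\<Sum>h\<le>N. g h)"
  proof (rule sum.mono_neutral_left)
    show "\<forall>h\<in>{..N} - (\<lambda>k. 2 * k) ` {0..c}. g h = 0"
    proof
      fix h assume h: "h \<in> {..N} - (\<lambda>k. 2 * k) ` {0..c}"
      show "g h = 0"
      proof (cases "even h")
        case True
        then obtain k where "h = 2 * k" by blast
        with h have "2 * c < h" by auto
        then show ?thesis by (rule big_zero)
      qed (rule odd_zero)
    qed
  qed (use assms(3) in auto)
  finally show ?thesis by simp
qed

theorem lemma1:
  fixes r :: "nat \<Rightarrow> 'a::comm_ring_1" and n l :: nat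
  shows "(\<Sum>k = 0..min n l. bnum r (2*n) (2*k) * bnum r (2*l) (2*k) * (\<Prod>j = 0..<2*k. r j))
         = bnum r (2*n + 2*l) 0"
proof -
  define g where "g h = bnum r (2*n) h * bdown r (2*l) h" for h
  have "bnum r (2*n + 2*l) 0 = (\<Sum>h\<le>2*n+2*l. g h)"
    unfolding g_def by (rule bnum_split)
  also have "\<dots> = (\<Sum>k = 0..min n l. g (2*k))"
  proof (rule sum_even_support)
    show "g h = 0" if "odd h" for h
      using that by (simp add: g_def bnum_odd)
    show "g h = 0" if "2 * min n l < h" for h
    proof -
      from that have "2 * n < h \<or> 2 * l < h" by auto
      then show ?thesis by (auto simp: g_def bdown_above_length bnum_above_length)
    qed
  qed simp
  finally show ?thesis
    by (simp add: g_def bdown_def mult.assoc atLeast0LessThan)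
qed

end
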